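(* For any $F\subset\bigcup_kS_k$ there is $d\in\{1,\dots,N\}$ such that $S^{N-1}_{\mathbb R}\cap\bar S^{N-1}_{\mathbb R,F}=S^{N-1,d-1}_{\mathbb R}$. Moreover $d\in\{1,2,N\}$.
   Context: $C(S^{N-1}_{\mathbb R,+})$ denotes the universal $C^*$-algebra generated by self-adjoint $x_1,\dots,x_N$ with $\sum_ix_i^2=1$; subspaces are quotients by relations among the $x_i$, intersections impose both sets of relations. $S^{N-1}_{\mathbb R}$ is defined by $x_ix_j=x_jx_i$ for all $i,j$ (the usual real sphere), and for $d\in\{1,\dots,N\}$, $S^{N-1,d-1}_{\mathbb R}=\{x\in S^{N-1}_{\mathbb R}: x_{i_0}\cdots x_{i_d}=0$ for all pairwise distinct $i_0,\dots,i_d\}$ (so $S^{N-1,N-1}_{\mathbb R}=S^{N-1}_{\mathbb R}$). For $\sigma\in S_k$ and indices $i_1,\dots,i_k$ let $\varepsilon_\sigma(i)=(-1)^m$ with $m$ the number of pairs $r<s$ with $\sigma(r)>\sigma(s)$ and $i_{\sigma(r)}\ne i_{\sigma(s)}$. For $F\subset\bigcup_kS_k$, $\bar S^{N-1}_{\mathbb R,F}$ is the subsphere of $S^{N-1}_{\mathbb R,+}$ defined by the relations $x_{i_1}\cdots x_{i_k}=\varepsilon_\sigma(i)x_{i_{\sigma(1)}}\cdots x_{i_{\sigma(k)}}$ for all $\sigma\in F$ (with $\sigma\in S_k$) and all $i_1,\dots,i_k$. *)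

theory Defs
  imports Complex_Main "HOL-Combinatorics.Permutations"
begin

text \<open>Points are functions x :: nat => real; coordinates x_1..x_N are x 0 .. x (N-1),
  and x i = 0 for i >= N (extensional).\<close>

definition real_sphere :: "nat \<Rightarrow> (nat \<Rightarrow> real) set" where
  "real_sphere N = {x. (\<forall>i\<ge>N. x i = 0) \<and> (\<Sum>i<N. (x i)^2) = 1}"

definition eps_sign :: "(nat \<Rightarrow> nat) \<Rightarrow> nat list \<Rightarrow> real" where
  "eps_sign \<sigma> is = (-1) ^ card {(r, s). r < s \<and> s < length is \<and> \<sigma> r > \<sigma> s
                                    \<and> is ! (\<sigma> r) \<noteq> is ! (\<sigma> s)}"

definition perm_family :: "(nat \<times> (nat \<Rightarrow> nat)) set \<Rightarrow> bool" where
  "perm_family F \<longleftrightarrow> (\<forall>(k, \<sigma>)\<in>F. \<sigma> permutes {..<k})"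

text \<open>Classical points (commuting coordinates) satisfying the relations of bar S_{R,F}:
  x_{i_1}...x_{i_k} = eps_sigma(i) x_{i_sigma(1)}...x_{i_sigma(k)}.\<close>
definition half_liberated_points :: "nat \<Rightarrow> (nat \<times> (nat \<Rightarrow> nat)) set \<Rightarrow> (nat \<Rightarrow> real) set" where
  "half_liberated_points N F = {x. \<forall>(k, \<sigma>)\<in>F. \<forall>is. length is = k \<and> set is \<subseteq> {..<N} \<longrightarrow>
      prod_list (map x is) = eps_sign \<sigma> is * prod_list (map (\<lambda>j. x (is ! \<sigma> j)) [0..<k])}"

definition real_sphere_sub :: "nat \<Rightarrow> nat \<Rightarrow> (nat \<Rightarrow> real) set" where
  "real_sphere_sub N d = {x \<in> real_sphere N. \<forall>is. length is = d + 1 \<and> distinct is \<and> set is \<subseteq> {..<N}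
      \<longrightarrow> prod_list (map x is) = 0}"

end

theory Submission
  imports Defs
begin

text \<open>For commuting coordinates both sides of a relation are the same monomial, so a relation
  with sign \<open>+1\<close> is void and one with sign \<open>-1\<close> says that the monomial vanishes. The sign
  only depends on which positions carry equal indices, so the vanishing monomials are closed under
  injective relabelling of the indices; hence they are all equivalent to the products of \<open>m\<close>
  distinct coordinates, where \<open>m\<close> is the least number of distinct indices of a vanishing
  monomial (\<open>d = m - 1\<close>, or \<open>d = N\<close> if there is none). A sign \<open>-1\<close> needs two distinct
  indices, so \<open>m \<ge> 2\<close>. If a sign is \<open>-1\<close> with four distinct indices \<open>a, b, u, w\<close>, then
  identifying \<open>b\<close> with \<open>a\<close>, \<open>w\<close> with \<open>u\<close>, or both, removes disjoint sets of inversions,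
  so by parity one of the three identifications keeps sign \<open>-1\<close>; hence \<open>m \<le> 3\<close>.\<close>

definition related_inversions ::
    "(nat \<Rightarrow> nat) \<Rightarrow> nat list \<Rightarrow> (nat \<Rightarrow> nat \<Rightarrow> bool) \<Rightarrow> (nat \<times> nat) set" where
  "related_inversions \<sigma> is Q =
     {(r, s). r < s \<and> s < length is \<and> \<sigma> r > \<sigma> s \<and> Q (is ! \<sigma> r) (is ! \<sigma> s)}"

lemma finite_related_inversions: "finite (related_inversions \<sigma> is Q)"
  by (rule finite_subset[of _ "{..<length is} \<times> {..<length is}"])
    (auto simp: related_inversions_def)

lemma eps_sign_eq_related_inversions:
  "eps_sign \<sigma> is = (-1) ^ card (related_inversions \<sigma> is (\<noteq>))"
  by (simp add: eps_sign_def related_inversions_def)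

lemma eps_sign_eq_neg_one_iff:
  "eps_sign \<sigma> is = -1 \<longleftrightarrow> odd (card (related_inversions \<sigma> is (\<noteq>)))"
  by (cases "even (card (related_inversions \<sigma> is (\<noteq>)))")
    (simp_all add: eps_sign_eq_related_inversions)

lemma eps_sign_cases: "eps_sign \<sigma> is = 1 \<or> eps_sign \<sigma> is = -1"
  by (cases "even (card (related_inversions \<sigma> is (\<noteq>)))")
    (simp_all add: eps_sign_eq_related_inversions)

lemma permutes_lessThan_less:
  assumes "\<sigma> permutes {..<n}" "r < n"
  shows "\<sigma> r < n"
  using permutes_in_image[OF assms(1)] assms(2) by simp

lemma related_inversions_map:
  assumes "\<sigma> permutes {..<length is}"
  shows "related_inversions \<sigma> (map g is) Q = related_inversions \<sigma> is (\<lambda>x y. Q (g x) (g y))"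
  using permutes_lessThan_less[OF assms] by (auto simp: related_inversions_def)

lemma related_inversions_cong:
  assumes "\<sigma> permutes {..<length is}"
    and "\<And>x y. x \<in> set is \<Longrightarrow> y \<in> set is \<Longrightarrow> P x y = Q x y"
  shows "related_inversions \<sigma> is P = related_inversions \<sigma> is Q"
  using permutes_lessThan_less[OF assms(1)] assms(2) by (auto simp: related_inversions_def)

lemma card_related_inversions_disj:
  assumes "\<And>x y. P x y \<longleftrightarrow> Q x y \<or> R x y" and "\<And>x y. \<not> (Q x y \<and> R x y)"
  shows "card (related_inversions \<sigma> is P) =
    card (related_inversions \<sigma> is Q) + card (related_inversions \<sigma> is R)"
proof -
  have "related_inversions \<sigma> is P = related_inversions \<sigma> is Q \<union> related_inversions \<sigma> is R"
    using assms(1) by (auto simp: related_inversions_def)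
  moreover have "related_inversions \<sigma> is Q \<inter> related_inversions \<sigma> is R = {}"
    using assms(2) by (auto simp: related_inversions_def)
  ultimately show ?thesis
    by (simp add: card_Un_disjoint finite_related_inversions)
qed

lemma eps_sign_map_inj:
  assumes "\<sigma> permutes {..<length is}" and "inj_on h (set is)"
  shows "eps_sign \<sigma> (map h is) = eps_sign \<sigma> is"
proof -
  have "related_inversions \<sigma> is (\<lambda>x y. h x \<noteq> h y) = related_inversions \<sigma> is (\<noteq>)"
    by (rule related_inversions_cong[OF assms(1)]) (use assms(2) in \<open>auto dest: inj_onD\<close>)
  then show ?thesis
    by (simp add: eps_sign_eq_related_inversions related_inversions_map[OF assms(1)])
qed

lemma eps_sign_eq_one_if_card_le_1:
  assumes "\<sigma> permutes {..<length is}" and "card (set is) \<le> 1"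
  shows "eps_sign \<sigma> is = 1"
proof -
  have "\<forall>a\<in>set is. \<forall>b\<in>set is. a = b"
    using assms(2) card_le_Suc0_iff_eq[of "set is"] by simp
  then have "is ! \<sigma> r = is ! \<sigma> s" if "r < s" "s < length is" for r s
    using that permutes_lessThan_less[OF assms(1)] by (meson nth_mem order.strict_trans)
  then have "related_inversions \<sigma> is (\<noteq>) = {}"
    unfolding related_inversions_def by blast
  then show ?thesis
    by (simp add: eps_sign_eq_related_inversions)
qed

lemma card_image_less_if_collapse:
  assumes "finite S" "a \<in> S" "b \<in> S" "a \<noteq> b" "g a = g b"
  shows "card (g ` S) < card S"
proof -
  have "\<not> inj_on g S"
    using assms by (auto dest: inj_onD)
  then show ?thesis
    using card_image_le[OF assms(1), of g] eq_card_imp_inj_on[OF assms(1), of g] by linarith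
qed

lemma eps_sign_neg_one_collapse:
  assumes perm: "\<sigma> permutes {..<length is}" and neg: "eps_sign \<sigma> is = -1"
    and four: "4 \<le> card (set is)"
  obtains g where "g ` set is \<subseteq> set is" "card (g ` set is) < card (set is)"
    "eps_sign \<sigma> (map g is) = -1"
proof -
  obtain T where T: "T \<subseteq> set is" "card T = 4"
    using obtain_subset_with_card_n[OF four] by metis
  then obtain a b u w where "T = {a, b, u, w}" "distinct [a, b, u, w]"
    by (auto simp: card_Suc_eq numeral_eq_Suc)
  with T have abuw: "a \<in> set is" "b \<in> set is" "u \<in> set is" "w \<in> set is"
      "distinct [a, b, u, w]"
    by auto
  define g1 where "g1 = (\<lambda>v. if v = b then a else v)"
  define g2 where "g2 = (\<lambda>v. if v = w then u else v)"
  define g3 where "g3 = (\<lambda>v. if v = b then a else if v = w then u else v)"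
  let ?I = "\<lambda>Q. card (related_inversions \<sigma> is Q)"
  let ?lost = "\<lambda>g. ?I (\<lambda>x y. x \<noteq> y \<and> g x = g y)"
  have split: "?I (\<noteq>) = ?I (\<lambda>x y. g x \<noteq> g y) + ?lost g" for g
    by (rule card_related_inversions_disj) blast+
  have parity: "odd a1 \<or> odd a2 \<or> odd a3"
    if "odd e" "e = a1 + b1" "e = a2 + b2" "e = a3 + b3" "b3 = b1 + b2" for e a1 a2 a3 b1 b2 b3 :: nat
    using that by presburger
  have "?lost g3 = ?lost g1 + ?lost g2"
    by (rule card_related_inversions_disj) (use abuw(5) in \<open>auto simp: g1_def g2_def g3_def\<close>)
  moreover have "odd (?I (\<noteq>))"
    using neg by (simp add: eps_sign_eq_neg_one_iff)
  ultimately have "odd (?I (\<lambda>x y. g1 x \<noteq> g1 y)) \<or> odd (?I (\<lambda>x y. g2 x \<noteq> g2 y))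
      \<or> odd (?I (\<lambda>x y. g3 x \<noteq> g3 y))"
    using split[of g1] split[of g2] split[of g3] parity by blast
  then have "\<exists>g\<in>{g1, g2, g3}. odd (?I (\<lambda>x y. g x \<noteq> g y))"
    by blast
  then obtain g where g: "g \<in> {g1, g2, g3}" "eps_sign \<sigma> (map g is) = -1"
    by (auto simp: eps_sign_eq_neg_one_iff related_inversions_map[OF perm])
  show thesis
  proof (rule that[OF _ _ g(2)])
    show "g ` set is \<subseteq> set is"
      using g(1) abuw by (auto simp: g1_def g2_def g3_def)
    show "card (g ` set is) < card (set is)"
    proof (cases "g = g2")
      case True
      then show ?thesis
        by (intro card_image_less_if_collapse[of _ u w]) (use abuw in \<open>auto simp: g2_def\<close>)
    next
      case False
      then show ?thesis
        using g(1) by (intro card_image_less_if_collapse[of _ a b])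
          (use abuw in \<open>auto simp: g1_def g3_def\<close>)
    qed
  qed
qed

lemma prod_list_permute:
  fixes x :: "nat \<Rightarrow> 'a :: comm_monoid_mult"
  assumes "\<sigma> permutes {..<length is}"
  shows "prod_list (map (\<lambda>j. x (is ! \<sigma> j)) [0..<length is]) = prod_list (map x is)"
proof -
  have "map (\<lambda>j. x (is ! \<sigma> j)) [0..<length is] = map x (permute_list \<sigma> is)"
    by (simp add: permute_list_def)
  moreover have "mset (map x (permute_list \<sigma> is)) = mset (map x is)"
    using assms by simp
  ultimately show ?thesis
    by (metis prod_mset_prod_list)
qed

lemma prod_list_map_eq_zero_iff:
  "prod_list (map f xs) = (0 :: 'a :: {semiring_no_zero_divisors, semiring_1}) \<longleftrightarrow> (\<exists>x\<in>set xs. f x = 0)"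
  by (induction xs) simp_all

definition sign_reversing_lists ::
    "nat \<Rightarrow> (nat \<times> (nat \<Rightarrow> nat)) set \<Rightarrow> nat list set" where
  "sign_reversing_lists N F =
     {is. \<exists>\<sigma>. (length is, \<sigma>) \<in> F \<and> set is \<subseteq> {..<N} \<and> eps_sign \<sigma> is = -1}"

lemma half_liberated_points_eq:
  assumes "perm_family F"
  shows "half_liberated_points N F =
    {x. \<forall>is\<in>sign_reversing_lists N F. \<exists>i\<in>set is. x i = 0}"
proof -
  have rel_iff: "prod_list (map x is) = eps_sign \<sigma> is * prod_list (map (\<lambda>j. x (is ! \<sigma> j)) [0..<k])
      \<longleftrightarrow> (eps_sign \<sigma> is = -1 \<longrightarrow> (\<exists>i\<in>set is. x i = 0))"
    if "(k, \<sigma>) \<in> F" "length is = k" for k \<sigma> "is" and x :: "nat \<Rightarrow> real"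
  proof -
    have "\<sigma> permutes {..<length is}"
      using that assms by (auto simp: perm_family_def)
    then have "prod_list (map (\<lambda>j. x (is ! \<sigma> j)) [0..<k]) = prod_list (map x is)"
      using that(2) prod_list_permute by blast
    then show ?thesis
      using eps_sign_cases[of \<sigma> "is"] by (auto simp: prod_list_map_eq_zero_iff)
  qed
  have "x \<in> half_liberated_points N F \<longleftrightarrow> (\<forall>(k, \<sigma>)\<in>F. \<forall>is. length is = k \<and> set is \<subseteq> {..<N}
      \<longrightarrow> eps_sign \<sigma> is = -1 \<longrightarrow> (\<exists>i\<in>set is. x i = 0))" for x
    by (auto simp: half_liberated_points_def rel_iff)
  moreover have "(\<forall>(k, \<sigma>)\<in>F. \<forall>is. length is = k \<and> set is \<subseteq> {..<N}
      \<longrightarrow> eps_sign \<sigma> is = -1 \<longrightarrow> (\<exists>i\<in>set is. x i = 0))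
      \<longleftrightarrow> (\<forall>is\<in>sign_reversing_lists N F. \<exists>i\<in>set is. x i = 0)" for x :: "nat \<Rightarrow> real"
    by (auto simp: sign_reversing_lists_def)
  ultimately show ?thesis
    by (simp add: set_eq_iff)
qed

lemma sign_reversing_listsE:
  assumes "perm_family F" "is \<in> sign_reversing_lists N F"
  obtains \<sigma> where "(length is, \<sigma>) \<in> F" "\<sigma> permutes {..<length is}" "eps_sign \<sigma> is = -1"
  using assms by (auto simp: sign_reversing_lists_def perm_family_def)

lemma sign_reversing_lists_relabel:
  assumes "perm_family F" "is \<in> sign_reversing_lists N F"
    and "inj_on h (set is)" "h ` set is \<subseteq> {..<N}"
  shows "map h is \<in> sign_reversing_lists N F"
proof -
  obtain \<sigma> where \<sigma>: "(length is, \<sigma>) \<in> F" "\<sigma> permutes {..<length is}" "eps_sign \<sigma> is = -1"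
    using sign_reversing_listsE[OF assms(1,2)] .
  with assms(3) have "eps_sign \<sigma> (map h is) = -1"
    by (simp add: eps_sign_map_inj)
  then show ?thesis
    using \<sigma>(1) assms(4) by (auto simp: sign_reversing_lists_def)
qed

lemma two_le_card_sign_reversing_list:
  assumes "perm_family F" "is \<in> sign_reversing_lists N F"
  shows "2 \<le> card (set is)"
proof (rule ccontr)
  assume "\<not> 2 \<le> card (set is)"
  then show False
    using sign_reversing_listsE[OF assms] eps_sign_eq_one_if_card_le_1 by fastforce
qed

lemma sign_reversing_lists_collapse:
  assumes "perm_family F" "is \<in> sign_reversing_lists N F" "4 \<le> card (set is)"
  obtains js where "js \<in> sign_reversing_lists N F" "card (set js) < card (set is)"
proof -
  obtain \<sigma> where \<sigma>: "(length is, \<sigma>) \<in> F" "\<sigma> permutes {..<length is}" "eps_sign \<sigma> is = -1"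
    using sign_reversing_listsE[OF assms(1,2)] .
  then obtain g where g: "g ` set is \<subseteq> set is" "card (g ` set is) < card (set is)"
      "eps_sign \<sigma> (map g is) = -1"
    using eps_sign_neg_one_collapse assms(3) by blast
  have "map g is \<in> sign_reversing_lists N F"
    using assms(2) g(1,3) \<sigma>(1) by (auto simp: sign_reversing_lists_def)
  then show thesis
    using that g(2) by simp
qed

text \<open>The value \<open>m = N + 1\<close> covers the case without sign-reversing lists: no \<open>N + 1\<close>
  indices below \<open>N\<close> are distinct, so the products of \<open>m\<close> distinct coordinates impose nothing.\<close>

lemma sign_reversing_lists_min_card:
  assumes "perm_family F"
  obtains m where "m \<in> {2, 3, N + 1}" "m \<le> N + 1"
    "\<forall>is\<in>sign_reversing_lists N F. m \<le> card (set is)"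
    "\<forall>T\<subseteq>{..<N}. card T = m \<longrightarrow> T \<in> set ` sign_reversing_lists N F"
proof (cases "sign_reversing_lists N F = {}")
  case True
  have "card T \<noteq> N + 1" if "T \<subseteq> {..<N}" for T :: "nat set"
    using card_mono[OF _ that] by simp
  with True show thesis
    by (intro that[of "N + 1"]) auto
next
  case False
  let ?W = "sign_reversing_lists N F"
  obtain i0 where i0: "i0 \<in> ?W" and min: "\<And>is. is \<in> ?W \<Longrightarrow> card (set i0) \<le> card (set is)"
    using False ex_has_least_nat[of "\<lambda>is. is \<in> ?W" _ "\<lambda>is. card (set is)"] by blast
  have "card (set i0) \<le> 3"
  proof (rule ccontr)
    assume "\<not> card (set i0) \<le> 3"
    then obtain js where "js \<in> ?W" "card (set js) < card (set i0)"
      using sign_reversing_lists_collapse[OF assms i0] by force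
    with min show False
      by fastforce
  qed
  moreover have "card (set i0) \<le> N"
    using i0 card_mono[of "{..<N}" "set i0"] by (auto simp: sign_reversing_lists_def)
  moreover have "T \<in> set ` ?W" if T: "T \<subseteq> {..<N}" "card T = card (set i0)" for T
  proof -
    have "finite T"
      using finite_subset[OF T(1)] by simp
    then obtain h where h: "bij_betw h (set i0) T"
      using T(2) finite_same_card_bij[of "set i0" T] by auto
    then have "map h i0 \<in> ?W"
      using T(1) by (intro sign_reversing_lists_relabel[OF assms i0]) (auto simp: bij_betw_def)
    moreover have "set (map h i0) = T"
      using h by (simp add: bij_betw_def)
    ultimately show ?thesis
      by blast
  qed
  ultimately show thesis
    using two_le_card_sign_reversing_list[OF assms i0] min
    by (intro that[of "card (set i0)"]) auto
qed

lemma hits_all_iff_hits_min_card_subsets: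
  assumes "\<forall>S\<in>\<S>. S \<subseteq> A \<and> finite S \<and> m \<le> card S"
    and "\<forall>T\<subseteq>A. card T = m \<longrightarrow> T \<in> \<S>"
  shows "(\<forall>S\<in>\<S>. \<exists>i\<in>S. P i) \<longleftrightarrow> (\<forall>T\<subseteq>A. card T = m \<longrightarrow> (\<exists>i\<in>T. P i))"
proof
  assume "\<forall>S\<in>\<S>. \<exists>i\<in>S. P i"
  then show "\<forall>T\<subseteq>A. card T = m \<longrightarrow> (\<exists>i\<in>T. P i)"
    using assms(2) by blast
next
  assume hits: "\<forall>T\<subseteq>A. card T = m \<longrightarrow> (\<exists>i\<in>T. P i)"
  show "\<forall>S\<in>\<S>. \<exists>i\<in>S. P i"
  proof
    fix S assume "S \<in> \<S>"
    then obtain T where "T \<subseteq> S" "card T = m" "S \<subseteq> A"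
      using assms(1) obtain_subset_with_card_n by metis
    then show "\<exists>i\<in>S. P i"
      using hits by blast
  qed
qed

lemma real_sphere_sub_eq_hits:
  "real_sphere_sub N d =
    {x \<in> real_sphere N. \<forall>T\<subseteq>{..<N}. card T = d + 1 \<longrightarrow> (\<exists>i\<in>T. x i = 0)}"
proof -
  have "(\<forall>is. length is = d + 1 \<and> distinct is \<and> set is \<subseteq> {..<N} \<longrightarrow> prod_list (map x is) = 0)
      \<longleftrightarrow> (\<forall>T\<subseteq>{..<N}. card T = d + 1 \<longrightarrow> (\<exists>i\<in>T. x i = 0))" for x :: "nat \<Rightarrow> real"
  proof (intro iffI allI impI)
    fix T assume "\<forall>is. length is = d + 1 \<and> distinct is \<and> set is \<subseteq> {..<N}
        \<longrightarrow> prod_list (map x is) = 0" "T \<subseteq> {..<N}" "card T = d + 1"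
    moreover have "finite T"
      using finite_subset[OF \<open>T \<subseteq> {..<N}\<close>] by simp
    ultimately show "\<exists>i\<in>T. x i = 0"
      by (auto simp: prod_list_map_eq_zero_iff dest!: spec[of _ "sorted_list_of_set T"])
  next
    fix "is" assume "\<forall>T\<subseteq>{..<N}. card T = d + 1 \<longrightarrow> (\<exists>i\<in>T. x i = 0)"
      "length is = d + 1 \<and> distinct is \<and> set is \<subseteq> {..<N}"
    then show "prod_list (map x is) = 0"
      by (auto simp: prod_list_map_eq_zero_iff distinct_card dest!: spec[of _ "set is"])
  qed
  then show ?thesis
    by (auto simp: real_sphere_sub_def)
qed

theorem proposition2p6:
  fixes N :: nat and F :: "(nat \<times> (nat \<Rightarrow> nat)) set"
  assumes "N \<ge> 1" and "perm_family F"
  shows "\<exists>d\<in>{1..N}. real_sphere N \<inter> half_liberated_points N F = real_sphere_sub N d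
           \<and> d \<in> {1, 2, N}"
proof -
  let ?W = "sign_reversing_lists N F"
  obtain m where m: "m \<in> {2, 3, N + 1}" "m \<le> N + 1"
    and min: "\<forall>is\<in>?W. m \<le> card (set is)"
    and all: "\<forall>T\<subseteq>{..<N}. card T = m \<longrightarrow> T \<in> set ` ?W"
    using sign_reversing_lists_min_card[OF assms(2)] by blast
  have "\<forall>S\<in>set ` ?W. S \<subseteq> {..<N} \<and> finite S \<and> m \<le> card S"
    using min by (auto simp: sign_reversing_lists_def)
  from hits_all_iff_hits_min_card_subsets[OF this all]
  have "(\<forall>is\<in>?W. \<exists>i\<in>set is. x i = 0) \<longleftrightarrow>
      (\<forall>T\<subseteq>{..<N}. card T = m - 1 + 1 \<longrightarrow> (\<exists>i\<in>T. x i = 0))" for x :: "nat \<Rightarrow> real"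
    using m(1) by auto
  then have "real_sphere N \<inter> half_liberated_points N F = real_sphere_sub N (m - 1)"
    by (auto simp: half_liberated_points_eq[OF assms(2)] real_sphere_sub_eq_hits)
  moreover have "m - 1 \<in> {1..N} \<and> m - 1 \<in> {1, 2, N}"
    using m assms(1) by auto
  ultimately show ?thesis by blast
qed

end
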